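(* In the setting of the context, assume every irreducible $T$-module is thin, and let $\mathbf{C}\in T$ be the unique element satisfying the three equations $$\mathbf{A}+\frac{q\mathbf{B}\mathbf{C}-q^{-1}\mathbf{C}\mathbf{B}}{q^2-q^{-2}}=\frac{(\mathbf{a}+\mathbf{a}^{-1})(\Lambda+\Lambda^{-1})+(\mathbf{b}+\mathbf{b}^{-1})(\mathbf{c}+\mathbf{c}^{-1})}{q+q^{-1}},$$ $$\mathbf{B}+\frac{q\mathbf{C}\mathbf{A}-q^{-1}\mathbf{A}\mathbf{C}}{q^2-q^{-2}}=\frac{(\mathbf{b}+\mathbf{b}^{-1})(\Lambda+\Lambda^{-1})+(\mathbf{c}+\mathbf{c}^{-1})(\mathbf{a}+\mathbf{a}^{-1})}{q+q^{-1}},$$ $$\mathbf{C}+\frac{q\mathbf{A}\mathbf{B}-q^{-1}\mathbf{B}\mathbf{A}}{q^2-q^{-2}}=\frac{(\mathbf{c}+\mathbf{c}^{-1})(\Lambda+\Lambda^{-1})+(\mathbf{a}+\mathbf{a}^{-1})(\mathbf{b}+\mathbf{b}^{-1})}{q+q^{-1}}.$$ Then each of $$\mathbf{A}+\frac{q\mathbf{B}\mathbf{C}-q^{-1}\mathbf{C}\mathbf{B}}{q^2-q^{-2}},\quad \mathbf{B}+\frac{q\mathbf{C}\mathbf{A}-q^{-1}\mathbf{A}\mathbf{C}}{q^2-q^{-2}},\quad \mathbf{C}+\frac{q\mathbf{A}\mathbf{B}-q^{-1}\mathbf{B}\mathbf{A}}{q^2-q^{-2}}$$ is central in $T$.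
   Context: Fix a nonzero $q\in\mathbb{C}$ with $q^4\neq1$. Let $\Gamma$ be a finite connected distance-regular graph (undirected, no loops or multiple edges) with vertex set $X$, distance $\partial$, diameter $D\ge3$; $V=\mathbb{C}^X$. $A$ is the adjacency matrix, $E_0,\dots,E_D$ the primitive idempotents of the Bose–Mesner algebra with $E_0=|X|^{-1}J$ and $E_1,\dots,E_D$ a $Q$-polynomial ordering; $A=\sum\theta_iE_i$. Fix a vertex $x$; $E_i^*$ is the diagonal $0/1$ matrix projecting onto vertices at distance $i$ from $x$; $A^*$ is diagonal with $(y,y)$-entry $|X|(E_1)_{xy}$, $A^*=\sum\theta_i^*E_i^*$; $T$ is the algebra generated by $A,A^*$. Assume $q$-Racah type: $\theta_i=w+uq^{2i-D}+vq^{D-2i}$, $\theta_i^*=w^*+u^*q^{2i-D}+v^*q^{D-2i}$, $u,u^*,v,v^*\neq0$; fix $a,b$ with $a^2=u/v$, $b^2=u^*/v^*$; $\mathbf{A}=(A-wI)/(av)$, $\mathbf{B}=(A^*-w^*I)/(bv^* )$. For an irreducible $T$-module $W\subseteq V$: endpoint $\rho=\min\{i:E_i^*W\ne0\}$, dual endpoint $\tau=\min\{i:E_iW\neq0\}$, diameter $d=|\{i:E^*_iW\ne0\}|-1$; thin means $\dim E^*_iW\le1$ for all $i$. Put $a(W)=aq^{2\tau+d-D}$, $b(W)=bq^{2\rho+d-D}$. If $W$ is thin, $(\mathbf{A}|_W,\{E_{\tau+i}|_W\}_{i=0}^d,\mathbf{B}|_W,\{E^*_{\rho+i}|_W\}_{i=0}^d)$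 is a Leonard system with eigenvalues $\vartheta_i=a(W)q^{2i-d}+a(W)^{-1}q^{d-2i}$ and dual eigenvalues $\vartheta^*_i=b(W)q^{2i-d}+b(W)^{-1}q^{d-2i}$; let $\kappa=0$ if $d=0$ and, for $d\ge1$, $\kappa=a(W)b(W)^{-1}q^{d-1}+a(W)^{-1}b(W)q^{1-d}+\phi_1/((q-q^{-1})(q^d-q^{-d}))$ where $\phi_1=(\vartheta^*_0-\vartheta^*_1)(\mathrm{trace}(E^*_\rho\mathbf{A}|_W)-\vartheta_d)$; $c(W)$ is a root of $\xi^2-\kappa\xi+1=0$ (defined up to reciprocal). Isomorphism of irreducible modules: linear bijection commuting with $T$; $\Psi$ = set of types; for $\psi\in\Psi$, $a(\psi),b(\psi),d(\psi),c(\psi)$ are $a(W),b(W)$, the diameter, and (a fixed choice of) $c(W)$ for $W$ of type $\psi$. $V_\psi$ = span of irreducible modules of type $\psi$, $V=\bigoplus_\psi V_\psi$, $e_\psi$ = identity on $V_\psi$, $0$ on other $V_\lambda$. Define $\mathbf{a}=\sum_\psi a(\psi)e_\psi$, $\mathbf{b}=\sum_\psi b(\psi)e_\psi$, $\mathbf{c}=\sum_\psi c(\psi)e_\psi$, $\Lambda=\sum_\psi q^{d(\psi)+1}e_\psi$ (these are invertible). *)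

theory Defs
  imports Complex_Main "Jordan_Normal_Form.Matrix"
begin

definition simple_graph :: "nat \<Rightarrow> (nat \<Rightarrow> nat \<Rightarrow> bool) \<Rightarrow> bool" where
  "simple_graph n G \<longleftrightarrow> (\<forall>x y. G x y \<longrightarrow> x < n \<and> y < n) \<and> (\<forall>x y. G x y \<longrightarrow> G y x) \<and> (\<forall>x. \<not> G x x)"

definition connected_graph :: "nat \<Rightarrow> (nat \<Rightarrow> nat \<Rightarrow> bool) \<Rightarrow> bool" where
  "connected_graph n G \<longleftrightarrow> (\<forall>x<n. \<forall>y<n. \<exists>k. (G ^^ k) x y)"

definition gdist :: "(nat \<Rightarrow> nat \<Rightarrow> bool) \<Rightarrow> nat \<Rightarrow> nat \<Rightarrow> nat" where
  "gdist G x y = (LEAST k. (G ^^ k) x y)"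

definition diameter :: "nat \<Rightarrow> (nat \<Rightarrow> nat \<Rightarrow> bool) \<Rightarrow> nat" where
  "diameter n G = Max {gdist G x y | x y. x < n \<and> y < n}"

definition distance_regular :: "nat \<Rightarrow> (nat \<Rightarrow> nat \<Rightarrow> bool) \<Rightarrow> bool" where
  "distance_regular n G \<longleftrightarrow> 0 < n \<and> simple_graph n G \<and> connected_graph n G \<and>
     (\<forall>i j x y x' y'. x < n \<longrightarrow> y < n \<longrightarrow> x' < n \<longrightarrow> y' < n \<longrightarrow>
        gdist G x y = gdist G x' y' \<longrightarrow>
        card {z. z < n \<and> gdist G x z = i \<and> gdist G y z = j}
          = card {z. z < n \<and> gdist G x' z = i \<and> gdist G y' z = j})"

definition adj_mat :: "nat \<Rightarrow> (nat \<Rightarrow> nat \<Rightarrow> bool) \<Rightarrow> complex mat" where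
  "adj_mat n G = mat n n (\<lambda>(x, y). if G x y then 1 else 0)"

definition all_ones :: "nat \<Rightarrow> complex mat" where
  "all_ones n = mat n n (\<lambda>_. 1)"

definition msum :: "nat \<Rightarrow> (nat \<Rightarrow> complex mat) \<Rightarrow> nat set \<Rightarrow> complex mat" where
  "msum n f I = mat n n (\<lambda>(x, y). \<Sum>i\<in>I. f i $$ (x, y))"

definition hadamard :: "nat \<Rightarrow> complex mat \<Rightarrow> complex mat \<Rightarrow> complex mat" where
  "hadamard n M N = mat n n (\<lambda>(x, y). M $$ (x, y) * N $$ (x, y))"

definition mtrace :: "complex mat \<Rightarrow> complex" where
  "mtrace M = (\<Sum>i<dim_row M. M $$ (i, i))"

text \<open>Bose-Mesner algebra: the span of the distance matrices A_0, ..., A_D\<close>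
definition bose_mesner :: "nat \<Rightarrow> (nat \<Rightarrow> nat \<Rightarrow> bool) \<Rightarrow> complex mat set" where
  "bose_mesner n G = {M \<in> carrier_mat n n. \<exists>c. \<forall>x<n. \<forall>y<n. M $$ (x, y) = c (gdist G x y)}"

text \<open>E_0,...,E_D are the primitive idempotents of the Bose-Mesner algebra
  (D+1 = dim of the algebra nonzero pairwise orthogonal idempotents of it summing to I).\<close>
definition primitive_idempotents ::
  "nat \<Rightarrow> (nat \<Rightarrow> nat \<Rightarrow> bool) \<Rightarrow> nat \<Rightarrow> (nat \<Rightarrow> complex mat) \<Rightarrow> bool" where
  "primitive_idempotents n G D Eid \<longleftrightarrow>
     (\<forall>i\<le>D. Eid i \<in> bose_mesner n G \<and> Eid i \<noteq> 0\<^sub>m n n) \<and>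
     (\<forall>i\<le>D. \<forall>j\<le>D. Eid i * Eid j = (if i = j then Eid i else 0\<^sub>m n n)) \<and>
     msum n Eid {..D} = 1\<^sub>m n"

text \<open>Q-polynomial ordering: Krein parameter q^h_{1j} (coefficient of E_h in E_1 o E_j)
  vanishes for |h-j|>1 and is nonzero for |h-j|=1.\<close>
definition q_polynomial_ordering :: "nat \<Rightarrow> (nat \<Rightarrow> complex mat) \<Rightarrow> nat \<Rightarrow> bool" where
  "q_polynomial_ordering n Eid D \<longleftrightarrow>
     (\<forall>h\<le>D. \<forall>j\<le>D.
        ((h > j + 1 \<or> j > h + 1) \<longrightarrow> hadamard n (Eid 1) (Eid j) * Eid h = 0\<^sub>m n n) \<and>
        ((h = j + 1 \<or> j = h + 1) \<longrightarrow> hadamard n (Eid 1) (Eid j) * Eid h \<noteq> 0\<^sub>m n n))"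

definition dual_idem :: "nat \<Rightarrow> (nat \<Rightarrow> nat \<Rightarrow> bool) \<Rightarrow> nat \<Rightarrow> nat \<Rightarrow> complex mat" where
  "dual_idem n G x i = mat n n (\<lambda>(y, z). if y = z \<and> gdist G x y = i then 1 else 0)"

definition dual_adj :: "nat \<Rightarrow> (nat \<Rightarrow> complex mat) \<Rightarrow> nat \<Rightarrow> complex mat" where
  "dual_adj n Eid x = mat n n (\<lambda>(y, z). if y = z then of_nat n * Eid 1 $$ (x, y) else 0)"

inductive_set term_alg :: "nat \<Rightarrow> complex mat \<Rightarrow> complex mat \<Rightarrow> complex mat set"
  for n :: nat and A :: "complex mat" and As :: "complex mat" where
  one: "1\<^sub>m n \<in> term_alg n A As"
| genA: "A \<in> term_alg n A As"
| genAs: "As \<in> term_alg n A As"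
| add: "M \<in> term_alg n A As \<Longrightarrow> N \<in> term_alg n A As \<Longrightarrow> M + N \<in> term_alg n A As"
| mult: "M \<in> term_alg n A As \<Longrightarrow> N \<in> term_alg n A As \<Longrightarrow> M * N \<in> term_alg n A As"
| smult: "M \<in> term_alg n A As \<Longrightarrow> c \<cdot>\<^sub>m M \<in> term_alg n A As"

definition tmodule :: "nat \<Rightarrow> complex mat set \<Rightarrow> complex vec set \<Rightarrow> bool" where
  "tmodule n T W \<longleftrightarrow> W \<subseteq> carrier_vec n \<and> 0\<^sub>v n \<in> W \<and> (\<forall>u\<in>W. \<forall>v\<in>W. u + v \<in> W) \<and>
     (\<forall>c. \<forall>u\<in>W. c \<cdot>\<^sub>v u \<in> W) \<and> (\<forall>M\<in>T. \<forall>u\<in>W. M *\<^sub>v u \<in> W)"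

definition irreducible_tmodule :: "nat \<Rightarrow> complex mat set \<Rightarrow> complex vec set \<Rightarrow> bool" where
  "irreducible_tmodule n T W \<longleftrightarrow> tmodule n T W \<and> W \<noteq> {0\<^sub>v n} \<and>
     (\<forall>W'. tmodule n T W' \<and> W' \<subseteq> W \<longrightarrow> W' = {0\<^sub>v n} \<or> W' = W)"

definition mod_iso :: "nat \<Rightarrow> complex mat set \<Rightarrow> complex vec set \<Rightarrow> complex vec set \<Rightarrow> bool" where
  "mod_iso n T W W' \<longleftrightarrow> (\<exists>f. bij_betw f W W' \<and> (\<forall>u\<in>W. \<forall>v\<in>W. f (u + v) = f u + f v) \<and>
     (\<forall>c. \<forall>u\<in>W. f (c \<cdot>\<^sub>v u) = c \<cdot>\<^sub>v f u) \<and> (\<forall>M\<in>T. \<forall>u\<in>W. f (M *\<^sub>v u) = M *\<^sub>v f u))"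

definition endpoint :: "nat \<Rightarrow> (nat \<Rightarrow> nat \<Rightarrow> bool) \<Rightarrow> nat \<Rightarrow> complex vec set \<Rightarrow> nat" where
  "endpoint n G x W = (LEAST i. \<exists>w\<in>W. dual_idem n G x i *\<^sub>v w \<noteq> 0\<^sub>v n)"

definition dual_endpoint :: "nat \<Rightarrow> (nat \<Rightarrow> complex mat) \<Rightarrow> nat \<Rightarrow> complex vec set \<Rightarrow> nat" where
  "dual_endpoint n Eid D W = (LEAST i. i \<le> D \<and> (\<exists>w\<in>W. Eid i *\<^sub>v w \<noteq> 0\<^sub>v n))"

definition mod_diameter :: "nat \<Rightarrow> (nat \<Rightarrow> nat \<Rightarrow> bool) \<Rightarrow> nat \<Rightarrow> complex vec set \<Rightarrow> nat" where
  "mod_diameter n G x W = card {i. \<exists>w\<in>W. dual_idem n G x i *\<^sub>v w \<noteq> 0\<^sub>v n} - 1"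

definition thin_module :: "nat \<Rightarrow> (nat \<Rightarrow> nat \<Rightarrow> bool) \<Rightarrow> nat \<Rightarrow> complex vec set \<Rightarrow> bool" where
  "thin_module n G x W \<longleftrightarrow> (\<forall>i. \<exists>w0. \<forall>w\<in>W. \<exists>c. dual_idem n G x i *\<^sub>v w = c \<cdot>\<^sub>v w0)"

text \<open>trace of the restriction of L to an L-invariant subspace W: trace of the matrix of L|_W
  w.r.t. a basis of W (the columns of Bm)\<close>
definition restr_trace :: "nat \<Rightarrow> complex mat \<Rightarrow> complex vec set \<Rightarrow> complex" where
  "restr_trace n L W = (THE t. \<exists>k Bm Cm. Bm \<in> carrier_mat n k \<and> Cm \<in> carrier_mat k k \<and>
      (\<forall>y\<in>carrier_vec k. Bm *\<^sub>v y = 0\<^sub>v n \<longrightarrow> y = 0\<^sub>v k) \<and>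
      W = {Bm *\<^sub>v y | y. y \<in> carrier_vec k} \<and> L * Bm = Bm * Cm \<and> t = mtrace Cm)"

definition mod_a :: "nat \<Rightarrow> (nat \<Rightarrow> nat \<Rightarrow> bool) \<Rightarrow> (nat \<Rightarrow> complex mat) \<Rightarrow> nat \<Rightarrow> nat \<Rightarrow>
    complex \<Rightarrow> complex \<Rightarrow> complex vec set \<Rightarrow> complex" where
  "mod_a n G Eid D x q a W =
     a * q powi (2 * int (dual_endpoint n Eid D W) + int (mod_diameter n G x W) - int D)"

definition mod_b :: "nat \<Rightarrow> (nat \<Rightarrow> nat \<Rightarrow> bool) \<Rightarrow> nat \<Rightarrow> nat \<Rightarrow>
    complex \<Rightarrow> complex \<Rightarrow> complex vec set \<Rightarrow> complex" where
  "mod_b n G D x q b W =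
     b * q powi (2 * int (endpoint n G x W) + int (mod_diameter n G x W) - int D)"

definition kappa_val :: "complex \<Rightarrow> complex \<Rightarrow> complex \<Rightarrow> nat \<Rightarrow> complex \<Rightarrow> complex" where
  "kappa_val q aW bW d tr =
     (if d = 0 then 0 else
      (let th = (\<lambda>i::nat. aW * q powi (2 * int i - int d) + inverse aW * q powi (int d - 2 * int i));
           ths = (\<lambda>i::nat. bW * q powi (2 * int i - int d) + inverse bW * q powi (int d - 2 * int i));
           phi1 = (ths 0 - ths 1) * (tr - th d)
       in aW * inverse bW * q powi (int d - 1) + inverse aW * bW * q powi (1 - int d)
          + phi1 / ((q - inverse q) * (q powi int d - q powi (- int d)))))"

definition mod_kappa :: "nat \<Rightarrow> (nat \<Rightarrow> nat \<Rightarrow> bool) \<Rightarrow> (nat \<Rightarrow> complex mat) \<Rightarrow> nat \<Rightarrow> nat \<Rightarrow>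
    complex \<Rightarrow> complex \<Rightarrow> complex \<Rightarrow> complex mat \<Rightarrow> complex vec set \<Rightarrow> complex" where
  "mod_kappa n G Eid D x q a b AA W =
     kappa_val q (mod_a n G Eid D x q a W) (mod_b n G D x q b W) (mod_diameter n G x W)
       (restr_trace n (dual_idem n G x (endpoint n G x W) * AA) W)"

text \<open>M = sum over types psi of f(psi) e_psi: M acts on each irreducible module W as the scalar f(W)\<close>
definition acts_as_scalar :: "nat \<Rightarrow> complex mat set \<Rightarrow> complex mat \<Rightarrow> (complex vec set \<Rightarrow> complex) \<Rightarrow> bool" where
  "acts_as_scalar n T M f \<longleftrightarrow> M \<in> carrier_mat n n \<and>
     (\<forall>W. irreducible_tmodule n T W \<longrightarrow> (\<forall>y\<in>W. M *\<^sub>v y = f W \<cdot>\<^sub>v y))"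

definition zlhs :: "complex \<Rightarrow> complex mat \<Rightarrow> complex mat \<Rightarrow> complex mat \<Rightarrow> complex mat" where
  "zlhs q X Y Z = X + (1 / (q^2 - inverse q ^ 2)) \<cdot>\<^sub>m (q \<cdot>\<^sub>m (Y * Z) - inverse q \<cdot>\<^sub>m (Z * Y))"

definition zrhs :: "complex \<Rightarrow> complex mat \<Rightarrow> complex mat \<Rightarrow> complex mat \<Rightarrow> complex mat \<Rightarrow>
    complex mat \<Rightarrow> complex mat \<Rightarrow> complex mat \<Rightarrow> complex mat \<Rightarrow> complex mat" where
  "zrhs q X Xi L Li Y Yi Z Zi = (1 / (q + inverse q)) \<cdot>\<^sub>m ((X + Xi) * (L + Li) + (Y + Yi) * (Z + Zi))"

definition central_in :: "complex mat set \<Rightarrow> complex mat \<Rightarrow> bool" where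
  "central_in T X \<longleftrightarrow> X \<in> T \<and> (\<forall>M\<in>T. X * M = M * X)"

end

theory Submission
  imports Defs "Jordan_Normal_Form.Gauss_Jordan_Elimination" "HOL-Computational_Algebra.Polynomial"
begin

text \<open>The right-hand sides of the three equations are built from the operators \<open>a\<close>, \<open>b\<close>, \<open>c\<close>,
  \<open>\<Lambda>\<close> and their inverses, each of which acts as a scalar on every irreducible \<open>T\<close>-module.
  The algebra \<open>T\<close> is closed under conjugate transposition: \<open>A\<close> is real symmetric, and the
  adjoint of the diagonal matrix \<open>A\<^sup>*\<close> is a polynomial in \<open>A\<^sup>*\<close>. Hence orthogonal
  complements of \<open>T\<close>-modules are \<open>T\<close>-modules, \<open>\<complex>\<^sup>n\<close> is spanned by irreducible
  \<open>T\<close>-modules, and every operator that is scalar on each of them commutes with \<open>T\<close>. So the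
  right-hand sides, and with them the left-hand sides, are central; the left-hand sides lie
  in \<open>T\<close> because \<open>C\<close> does.\<close>

lemma mult_mat_vec_zero [simp]: "M \<in> carrier_mat n m \<Longrightarrow> M *\<^sub>v 0\<^sub>v m = (0\<^sub>v n :: 'a :: semiring_0 vec)"
  by (intro eq_vecI) (auto simp: scalar_prod_def)

lemma mat_eq_by_mult_vec:
  fixes X Y :: "'a :: semiring_1 mat"
  assumes "X \<in> carrier_mat n n" "Y \<in> carrier_mat n n" "\<And>v. v \<in> carrier_vec n \<Longrightarrow> X *\<^sub>v v = Y *\<^sub>v v"
  shows "X = Y"
proof (rule eq_matI)
  fix i j assume ij: "i < dim_row Y" "j < dim_col Y"
  have "(X *\<^sub>v unit_vec n j) $ i = (Y *\<^sub>v unit_vec n j) $ i" using assms(3)[of "unit_vec n j"] by simp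
  then show "X $$ (i, j) = Y $$ (i, j)" using assms(1,2) ij by (simp add: scalar_prod_right_unit)
qed (use assms in auto)

text \<open>\<open>Jordan_Normal_Form.Determinant\<close> has this fact as \<open>mat_mult_left_right_inverse\<close>, but
  importing it would shadow \<open>adj_mat\<close> from \<open>Defs\<close>.\<close>

lemma mat_right_inverse_imp_left_inverse:
  fixes P Q :: "'a :: field mat"
  assumes P: "P \<in> carrier_mat n n" and Q: "Q \<in> carrier_mat n n" and PQ: "P * Q = 1\<^sub>m n"
  shows "Q * P = 1\<^sub>m n"
proof -
  let ?E = "gauss_jordan_single P"
  obtain R S where E: "?E = R * P" and R: "R \<in> carrier_mat n n" "S \<in> carrier_mat n n" "R * S = 1\<^sub>m n"
    using gauss_jordan_single(4)[OF P refl] by blast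
  have EQ: "?E * Q = R" using E P Q R PQ by (simp add: assoc_mult_mat[of _ n n _ n _ n])
  have "?E = 1\<^sub>m n \<or> (n > 0 \<and> row ?E (n - 1) = 0\<^sub>v n)"
    using row_echelon_form_imp_1_or_0_row gauss_jordan_single(2,3)[OF P refl] by blast
  moreover have "\<not> (n > 0 \<and> row ?E (n - 1) = 0\<^sub>v n)"
  proof
    assume zero_row: "n > 0 \<and> row ?E (n - 1) = 0\<^sub>v n"
    then have "row R (n - 1) = 0\<^sub>v n"
      using gauss_jordan_single(2)[OF P refl] Q by (auto simp flip: EQ intro!: eq_vecI)
    then have "(R * S) $$ (n - 1, n - 1) = 0" using R(1,2) zero_row by (simp add: scalar_prod_def)
    then show False using R(3) zero_row by simp
  qed
  ultimately have RP: "R * P = 1\<^sub>m n" using E by auto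
  have "Q = R * P * Q" using RP Q by simp
  also have "\<dots> = R" using R P Q PQ by (simp add: assoc_mult_mat[of _ n n _ n _ n])
  finally show ?thesis using RP by simp
qed

definition adjoint_mat :: "complex mat \<Rightarrow> complex mat" where
  "adjoint_mat M = mat (dim_col M) (dim_row M) (\<lambda>(i, j). cnj (M $$ (j, i)))"

lemma adjoint_mat_one [simp]: "adjoint_mat (1\<^sub>m n) = 1\<^sub>m n"
  unfolding adjoint_mat_def by (intro eq_matI) auto

lemma adjoint_mat_add:
  "M \<in> carrier_mat n m \<Longrightarrow> N \<in> carrier_mat n m \<Longrightarrow>
   adjoint_mat (M + N) = adjoint_mat M + adjoint_mat N"
  unfolding adjoint_mat_def by (intro eq_matI) auto

lemma adjoint_mat_smult: "adjoint_mat (c \<cdot>\<^sub>m M) = cnj c \<cdot>\<^sub>m adjoint_mat M"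
  unfolding adjoint_mat_def by (intro eq_matI) auto

lemma adjoint_mat_mult:
  "M \<in> carrier_mat n m \<Longrightarrow> N \<in> carrier_mat m k \<Longrightarrow>
   adjoint_mat (M * N) = adjoint_mat N * adjoint_mat M"
  unfolding adjoint_mat_def by (intro eq_matI) (auto simp: scalar_prod_def cnj_sum mult.commute)

lemma cscalar_prod_mult_mat_vec:
  fixes M :: "complex mat"
  assumes "M \<in> carrier_mat n m" "u \<in> carrier_vec m" "v \<in> carrier_vec n"
  shows "(M *\<^sub>v u) \<bullet>c v = u \<bullet>c (adjoint_mat M *\<^sub>v v)"
proof -
  have "(M *\<^sub>v u) \<bullet>c v = (\<Sum>i<n. (\<Sum>j<m. M $$ (i, j) * u $ j) * cnj (v $ i))"
    using assms by (auto simp: scalar_prod_def atLeast0LessThan intro!: sum.cong)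
  also have "\<dots> = (\<Sum>j<m. u $ j * (\<Sum>i<n. M $$ (i, j) * cnj (v $ i)))"
    by (simp add: sum_distrib_left sum_distrib_right mult_ac sum.swap[of _ "{..<n}"])
  also have "\<dots> = u \<bullet>c (adjoint_mat M *\<^sub>v v)"
    using assms by (auto simp: scalar_prod_def atLeast0LessThan adjoint_mat_def cnj_sum mult.commute
        intro!: sum.cong)
  finally show ?thesis .
qed

lemma cscalar_prod_swap: "u \<in> carrier_vec n \<Longrightarrow> v \<in> carrier_vec n \<Longrightarrow> u \<bullet>c v = cnj (v \<bullet>c u)"
  by (simp add: scalar_prod_def cnj_sum mult.commute)

lemma cscalar_prod_add_right:
  "u \<in> carrier_vec n \<Longrightarrow> v \<in> carrier_vec n \<Longrightarrow> w \<in> carrier_vec n \<Longrightarrow>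
   u \<bullet>c (v + w) = u \<bullet>c v + u \<bullet>c w"
  by (simp add: conjugate_add_vec scalar_prod_add_distrib[of _ n])

lemma cscalar_prod_smult_right:
  "u \<in> carrier_vec n \<Longrightarrow> v \<in> carrier_vec n \<Longrightarrow> u \<bullet>c (c \<cdot>\<^sub>v v) = cnj c * (u \<bullet>c v)"
  by (simp add: conjugate_smult_vec)

lemma cscalar_prod_diff_smult_left:
  "u \<in> carrier_vec n \<Longrightarrow> v \<in> carrier_vec n \<Longrightarrow> w \<in> carrier_vec n \<Longrightarrow>
   (u - c \<cdot>\<^sub>v v) \<bullet>c w = u \<bullet>c w - c * (v \<bullet>c w)"
  by (simp add: minus_scalar_prod_distrib[of _ n])

section \<open>Subspaces of \<open>\<complex>\<^sup>n\<close> and orthogonal projection\<close>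

definition subspace_vec :: "nat \<Rightarrow> complex vec set \<Rightarrow> bool" where
  "subspace_vec n W \<longleftrightarrow> W \<subseteq> carrier_vec n \<and> 0\<^sub>v n \<in> W \<and>
     (\<forall>u\<in>W. \<forall>v\<in>W. u + v \<in> W) \<and> (\<forall>c. \<forall>u\<in>W. c \<cdot>\<^sub>v u \<in> W)"

text \<open>The set of pivot positions of a subspace (the indices at which some of its vectors have
  their first nonzero entry) replaces the dimension: it is monotone, and by elimination two
  nested subspaces with the same pivots coincide.\<close>

definition pivots :: "nat \<Rightarrow> complex vec set \<Rightarrow> nat set" where
  "pivots n W = {i. i < n \<and> (\<exists>w\<in>W. w $ i \<noteq> 0 \<and> (\<forall>j<i. w $ j = 0))}"

lemma subspace_vec_diff:
  assumes "subspace_vec n W" "u \<in> W" "v \<in> W"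
  shows "u - v \<in> W"
proof -
  have "u \<in> carrier_vec n" "v \<in> carrier_vec n" using assms unfolding subspace_vec_def by auto
  then have "u - v = u + (-1) \<cdot>\<^sub>v v" by (intro eq_vecI) auto
  then show ?thesis using assms unfolding subspace_vec_def by auto
qed

lemma pivots_mono: "W' \<subseteq> W \<Longrightarrow> pivots n W' \<subseteq> pivots n W"
  unfolding pivots_def by blast

lemma pivot_elimination_step:
  assumes W: "subspace_vec n W" and W': "subspace_vec n W'" and sub: "W' \<subseteq> W"
    and piv: "pivots n W \<subseteq> pivots n W'" and k: "k < n"
    and IH: "\<forall>w\<in>W. (\<forall>j<Suc k. w $ j = 0) \<longrightarrow> w \<in> W'"
    and w: "w \<in> W" "\<forall>j<k. w $ j = 0"
  shows "w \<in> W'"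
proof (cases "w $ k = 0")
  case True
  then show ?thesis using IH w less_Suc_eq by auto
next
  case False
  then have "k \<in> pivots n W" using k w unfolding pivots_def by auto
  with piv obtain w' where w': "w' \<in> W'" "w' $ k \<noteq> 0" "\<forall>j<k. w' $ j = 0"
    unfolding pivots_def by auto
  have carrier: "w \<in> carrier_vec n" "w' \<in> carrier_vec n"
    using w w' W W' unfolding subspace_vec_def by auto
  define c where "c = w $ k / w' $ k"
  have cw': "c \<cdot>\<^sub>v w' \<in> W'" using w' W' unfolding subspace_vec_def by auto
  have "w - c \<cdot>\<^sub>v w' \<in> W" using subspace_vec_diff[OF W w(1)] cw' sub by auto
  moreover have "\<forall>j<Suc k. (w - c \<cdot>\<^sub>v w') $ j = 0"
    using carrier k w'(2,3) w(2) by (auto simp: c_def less_Suc_eq)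
  ultimately have "w - c \<cdot>\<^sub>v w' \<in> W'" using IH by blast
  then have "(w - c \<cdot>\<^sub>v w') + c \<cdot>\<^sub>v w' \<in> W'" using cw' W' unfolding subspace_vec_def by blast
  moreover have "(w - c \<cdot>\<^sub>v w') + c \<cdot>\<^sub>v w' = w" using carrier by (intro eq_vecI) auto
  ultimately show ?thesis by simp
qed

lemma subspace_vec_subset_if_pivots_subset:
  assumes W: "subspace_vec n W" and W': "subspace_vec n W'" and sub: "W' \<subseteq> W"
    and piv: "pivots n W \<subseteq> pivots n W'"
  shows "W \<subseteq> W'"
proof -
  have "\<forall>w\<in>W. (\<forall>j<k. w $ j = 0) \<longrightarrow> w \<in> W'" if "k \<le> n" for k
    using that
  proof (induction k rule: inc_induct)
    case base
    show ?case
    proof (intro ballI impI)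
      fix w assume "w \<in> W" "\<forall>j<n. w $ j = 0"
      moreover have "w \<in> carrier_vec n" using \<open>w \<in> W\<close> W unfolding subspace_vec_def by auto
      ultimately have "w = 0\<^sub>v n" by (intro eq_vecI) auto
      then show "w \<in> W'" using W' unfolding subspace_vec_def by auto
    qed
  next
    case (step k)
    then show ?case using pivot_elimination_step[OF W W' sub piv] by blast
  qed
  then show ?thesis by blast
qed

lemma card_pivots_strict_mono:
  assumes "subspace_vec n W" "subspace_vec n W'" "W' \<subset> W"
  shows "card (pivots n W') < card (pivots n W)"
proof -
  have "pivots n W' \<subset> pivots n W"
    using subspace_vec_subset_if_pivots_subset[OF assms(1,2)] pivots_mono assms(3) by blast
  moreover have "finite (pivots n W)" unfolding pivots_def by auto
  ultimately show ?thesis by (rule psubset_card_mono[rotated])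
qed

text \<open>Gram--Schmidt step: a projection of \<open>v\<close> onto \<open>w\<^sub>0\<^sup>\<bottom> \<inter> W\<close> is corrected along \<open>w\<^sub>0\<close>
  to a projection onto \<open>W\<close>.\<close>

lemma orthogonal_projection_extend:
  assumes W: "subspace_vec n W" and w0: "w0 \<in> W" "w0 \<bullet>c w0 \<noteq> 0"
    and v: "v \<in> carrier_vec n" and w1: "w1 \<in> W"
    and proj: "\<forall>x\<in>W. x \<bullet>c w0 = 0 \<longrightarrow> (v - w1) \<bullet>c x = 0"
  shows "\<exists>w\<in>W. \<forall>x\<in>W. (v - w) \<bullet>c x = 0"
proof -
  have carrier: "w0 \<in> carrier_vec n" "w1 \<in> carrier_vec n"
    using w0 w1 W unfolding subspace_vec_def by auto
  define r where "r = v - w1"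
  have r: "r \<in> carrier_vec n" using v carrier unfolding r_def by auto
  define c where "c = r \<bullet>c w0 / (w0 \<bullet>c w0)"
  have "w1 + c \<cdot>\<^sub>v w0 \<in> W" using W w0 w1 unfolding subspace_vec_def by auto
  moreover have "(v - (w1 + c \<cdot>\<^sub>v w0)) \<bullet>c x = 0" if x: "x \<in> W" for x
  proof -
    have xc: "x \<in> carrier_vec n" using x W unfolding subspace_vec_def by auto
    define e where "e = x \<bullet>c w0 / (w0 \<bullet>c w0)"
    define x0 where "x0 = x - e \<cdot>\<^sub>v w0"
    have x0c: "x0 \<in> carrier_vec n" unfolding x0_def using xc carrier by auto
    have x0w0: "x0 \<bullet>c w0 = 0"
      unfolding x0_def using xc carrier w0(2) by (simp add: cscalar_prod_diff_smult_left e_def)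
    have "x0 \<in> W" unfolding x0_def using subspace_vec_diff[OF W x] W w0 unfolding subspace_vec_def by auto
    then have rx0: "r \<bullet>c x0 = 0" using proj x0w0 unfolding r_def by auto
    have w0x0: "w0 \<bullet>c x0 = 0" using x0w0 cscalar_prod_swap[OF carrier(1) x0c] by simp
    have "x = x0 + e \<cdot>\<^sub>v w0" unfolding x0_def using xc carrier by (intro eq_vecI) auto
    moreover have "v - (w1 + c \<cdot>\<^sub>v w0) = r - c \<cdot>\<^sub>v w0"
      unfolding r_def using v carrier by (intro eq_vecI) auto
    ultimately have "(v - (w1 + c \<cdot>\<^sub>v w0)) \<bullet>c x = cnj e * (r \<bullet>c w0 - c * (w0 \<bullet>c w0))"
      using r carrier x0c
      by (simp add: cscalar_prod_diff_smult_left cscalar_prod_add_right cscalar_prod_smult_right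
          rx0 w0x0 algebra_simps)
    also have "\<dots> = 0" unfolding c_def using w0(2) by simp
    finally show ?thesis .
  qed
  ultimately show ?thesis by blast
qed

lemma orthogonal_projection_exists:
  assumes "subspace_vec n W" "v \<in> carrier_vec n"
  shows "\<exists>w\<in>W. \<forall>x\<in>W. (v - w) \<bullet>c x = 0"
  using assms
proof (induction "card (pivots n W)" arbitrary: W rule: less_induct)
  case less
  show ?case
  proof (cases "W = {0\<^sub>v n}")
    case True
    then show ?thesis by (auto simp: scalar_prod_def)
  next
    case False
    then obtain w0 where w0: "w0 \<in> W" "w0 \<noteq> 0\<^sub>v n" using less(2) unfolding subspace_vec_def by auto
    have w0c: "w0 \<in> carrier_vec n" using w0 less(2) unfolding subspace_vec_def by auto
    then have w0w0: "w0 \<bullet>c w0 \<noteq> 0" using w0(2) by simp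
    define W0 where "W0 = {x \<in> W. x \<bullet>c w0 = 0}"
    have W0: "subspace_vec n W0"
      using less(2) w0c unfolding subspace_vec_def W0_def
      by (auto simp: add_scalar_prod_distrib[of _ n] subset_iff)
    have "W0 \<subset> W" using w0 w0w0 unfolding W0_def by auto
    then have "card (pivots n W0) < card (pivots n W)"
      using card_pivots_strict_mono less(2) W0 by blast
    from less(1)[OF this W0 less(3)] obtain w1 where "w1 \<in> W0" "\<forall>x\<in>W0. (v - w1) \<bullet>c x = 0"
      by auto
    then show ?thesis
      using orthogonal_projection_extend[OF less(2) w0(1) w0w0 less(3)] unfolding W0_def by auto
  qed
qed

section \<open>Complete reducibility of adjoint-closed matrix sets\<close>

lemma tmodule_subspace_vec: "tmodule n T W \<Longrightarrow> subspace_vec n W"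
  unfolding tmodule_def subspace_vec_def by auto

lemma irreducible_tmodule_closed:
  assumes "irreducible_tmodule n T W" "w \<in> W"
  shows "w \<in> carrier_vec n" "c \<cdot>\<^sub>v w \<in> W" "M \<in> T \<Longrightarrow> M *\<^sub>v w \<in> W"
proof -
  have "tmodule n T W" using assms(1) unfolding irreducible_tmodule_def by simp
  then show "w \<in> carrier_vec n" "c \<cdot>\<^sub>v w \<in> W" "M \<in> T \<Longrightarrow> M *\<^sub>v w \<in> W"
    using assms(2) unfolding tmodule_def by auto
qed

lemma irreducible_tmodule_nonzero: "irreducible_tmodule n T W \<Longrightarrow> \<exists>w\<in>W. w \<noteq> 0\<^sub>v n"
proof -
  assume "irreducible_tmodule n T W"
  then have "W \<noteq> {0\<^sub>v n}" "0\<^sub>v n \<in> W" unfolding irreducible_tmodule_def tmodule_def by simp_all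
  then show ?thesis by blast
qed

lemma exists_irreducible_submodule:
  assumes "tmodule n T U" "U \<noteq> {0\<^sub>v n}"
  shows "\<exists>W. irreducible_tmodule n T W \<and> W \<subseteq> U"
proof -
  let ?P = "\<lambda>W. tmodule n T W \<and> W \<subseteq> U \<and> W \<noteq> {0\<^sub>v n}"
  obtain W where W: "?P W" "\<forall>W'. ?P W' \<longrightarrow> card (pivots n W) \<le> card (pivots n W')"
    using ex_has_least_nat[of ?P U "\<lambda>W. card (pivots n W)"] assms by auto
  have "W' = {0\<^sub>v n} \<or> W' = W" if W': "tmodule n T W'" "W' \<subseteq> W" for W'
  proof (rule ccontr)
    assume "\<not> (W' = {0\<^sub>v n} \<or> W' = W)"
    then have "?P W'" "W' \<subset> W" using W W' by auto
    then show False
      using W(2) card_pivots_strict_mono[of n W W'] tmodule_subspace_vec W(1) W'(1) by fastforce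
  qed
  then have "irreducible_tmodule n T W" using W(1) unfolding irreducible_tmodule_def by blast
  then show ?thesis using W(1) by blast
qed

inductive_set irreducible_span :: "nat \<Rightarrow> complex mat set \<Rightarrow> complex vec set" for n T where
  zero: "0\<^sub>v n \<in> irreducible_span n T"
| add: "irreducible_tmodule n T W \<Longrightarrow> w \<in> W \<Longrightarrow> s \<in> irreducible_span n T \<Longrightarrow>
    w + s \<in> irreducible_span n T"

lemma irreducible_span_carrier: "v \<in> irreducible_span n T \<Longrightarrow> v \<in> carrier_vec n"
  by (induction rule: irreducible_span.induct) (auto dest: irreducible_tmodule_closed(1))

lemma irreducible_span_induct_linear [consumes 1, case_names zero add]:
  assumes "v \<in> irreducible_span n T"
    and "P (0\<^sub>v n)"
    and "\<And>W w s. irreducible_tmodule n T W \<Longrightarrow> w \<in> W \<Longrightarrow> s \<in> irreducible_span n T \<Longrightarrow> P s \<Longrightarrow>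
           w \<in> carrier_vec n \<Longrightarrow> s \<in> carrier_vec n \<Longrightarrow> P (w + s)"
  shows "P v"
  using assms(1)
  by (induction rule: irreducible_span.induct)
    (auto intro: assms(2,3) irreducible_span_carrier irreducible_tmodule_closed(1))

lemma tmodule_irreducible_span:
  assumes T: "T \<subseteq> carrier_mat n n"
  shows "tmodule n T (irreducible_span n T)"
proof -
  have closed_add: "u + v \<in> irreducible_span n T"
    if "u \<in> irreducible_span n T" "v \<in> irreducible_span n T" for u v
    using that(1)
  proof (induction rule: irreducible_span_induct_linear)
    case (add W w s)
    then have "w + s + v = w + (s + v)" using irreducible_span_carrier[OF that(2)] by auto
    then show ?case using add irreducible_span.add by simp
  qed (use that(2) irreducible_span_carrier in auto)
  have map: "f u \<in> irreducible_span n T"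
    if u: "u \<in> irreducible_span n T"
      and f0: "f (0\<^sub>v n) = 0\<^sub>v n"
      and fadd: "\<And>w s. w \<in> carrier_vec n \<Longrightarrow> s \<in> carrier_vec n \<Longrightarrow> f (w + s) = f w + f s"
      and fW: "\<And>W w. irreducible_tmodule n T W \<Longrightarrow> w \<in> W \<Longrightarrow> f w \<in> W" for f u
    using u by (induction rule: irreducible_span_induct_linear)
      (auto simp: f0 fadd intro: irreducible_span.zero irreducible_span.add fW)
  have "c \<cdot>\<^sub>v u \<in> irreducible_span n T" if "u \<in> irreducible_span n T" for c u
    by (rule map[where f = "(\<cdot>\<^sub>v) c", OF that]) (auto simp: smult_add_distrib_vec irreducible_tmodule_closed(2))
  moreover have "M *\<^sub>v u \<in> irreducible_span n T" if "M \<in> T" "u \<in> irreducible_span n T" for M u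
    by (rule map[where f = "(*\<^sub>v) M", OF that(2)])
      (use T that in \<open>auto simp: mult_add_distrib_mat_vec irreducible_tmodule_closed(3)\<close>)
  ultimately show ?thesis
    unfolding tmodule_def using closed_add irreducible_span_carrier irreducible_span.zero by blast
qed

lemma tmodule_orthogonal_complement:
  assumes T: "T \<subseteq> carrier_mat n n" "adjoint_mat ` T \<subseteq> T" and U: "tmodule n T U"
  shows "tmodule n T {r \<in> carrier_vec n. \<forall>x\<in>U. r \<bullet>c x = 0}"
proof -
  have "(M *\<^sub>v r) \<bullet>c x = 0" if "M \<in> T" "r \<in> carrier_vec n" "\<forall>x\<in>U. r \<bullet>c x = 0" "x \<in> U" for M r x
  proof -
    have "x \<in> carrier_vec n" "adjoint_mat M *\<^sub>v x \<in> U" using U T that unfolding tmodule_def by auto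
    then show ?thesis using that T cscalar_prod_mult_mat_vec[of M n n r x] by auto
  qed
  moreover have "U \<subseteq> carrier_vec n" using U unfolding tmodule_def by auto
  ultimately show ?thesis
    using T unfolding tmodule_def by (auto simp: add_scalar_prod_distrib[of _ n] subset_iff)
qed

theorem irreducible_span_eq_carrier:
  assumes T: "T \<subseteq> carrier_mat n n" "adjoint_mat ` T \<subseteq> T" and v: "v \<in> carrier_vec n"
  shows "v \<in> irreducible_span n T"
proof -
  let ?S = "irreducible_span n T"
  let ?R = "{r \<in> carrier_vec n. \<forall>x\<in>?S. r \<bullet>c x = 0}"
  have S: "tmodule n T ?S" using tmodule_irreducible_span[OF T(1)] .
  obtain s where s: "s \<in> ?S" "\<forall>x\<in>?S. (v - s) \<bullet>c x = 0"
    using orthogonal_projection_exists[OF tmodule_subspace_vec[OF S] v] by auto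
  have "?R = {0\<^sub>v n}"
  proof (rule ccontr)
    assume "?R \<noteq> {0\<^sub>v n}"
    then obtain W where W: "irreducible_tmodule n T W" "W \<subseteq> ?R"
      using exists_irreducible_submodule tmodule_orthogonal_complement[OF T S] by blast
    then obtain w where w: "w \<in> W" "w \<noteq> 0\<^sub>v n" using irreducible_tmodule_nonzero by blast
    have wc: "w \<in> carrier_vec n" using irreducible_tmodule_closed(1) W w by auto
    then have "w \<in> ?S" using irreducible_span.add[OF W(1) w(1) irreducible_span.zero] by simp
    then have "w \<bullet>c w = 0" using W w by auto
    then show False using wc w by simp
  qed
  moreover have "v - s \<in> ?R" using s v irreducible_span_carrier by auto
  ultimately have "v - s = 0\<^sub>v n" by blast
  then have "v = s" using v irreducible_span_carrier[OF s(1)]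
    by (metis carrier_vecD eq_vecI index_minus_vec(1) index_zero_vec(1) right_minus_eq)
  then show ?thesis using s by simp
qed

definition centralizer :: "nat \<Rightarrow> 'a :: comm_ring_1 mat set \<Rightarrow> 'a mat set" where
  "centralizer n S = {P \<in> carrier_mat n n. \<forall>M\<in>S. P * M = M * P}"

text \<open>An operator acting as a scalar on each irreducible module commutes with \<open>T\<close> on every such
  module, hence everywhere by complete reducibility.\<close>

theorem acts_as_scalar_in_centralizer:
  assumes T: "T \<subseteq> carrier_mat n n" "adjoint_mat ` T \<subseteq> T" and X: "acts_as_scalar n T X f"
  shows "X \<in> centralizer n T"
proof -
  have Xc: "X \<in> carrier_mat n n" using X unfolding acts_as_scalar_def by auto
  have "(X * M) *\<^sub>v v = (M * X) *\<^sub>v v" if M: "M \<in> T" and v: "v \<in> carrier_vec n" for M v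
  proof -
    have Mc: "M \<in> carrier_mat n n" using M T by auto
    have "v \<in> irreducible_span n T" using irreducible_span_eq_carrier[OF T v] .
    then show ?thesis
    proof (induction rule: irreducible_span_induct_linear)
      case (add W w s)
      have "M *\<^sub>v w \<in> W" using add M by (simp add: irreducible_tmodule_closed(3))
      then have "(X * M) *\<^sub>v w = f W \<cdot>\<^sub>v (M *\<^sub>v w)"
        using X add Xc Mc unfolding acts_as_scalar_def by auto
      also have "\<dots> = (M * X) *\<^sub>v w"
        using X add Xc Mc unfolding acts_as_scalar_def by (auto simp: mult_mat_vec)
      finally show ?case using add Xc Mc by (simp add: mult_add_distrib_mat_vec[of _ n n])
    qed (use Xc Mc in simp)
  qed
  then show ?thesis
    unfolding centralizer_def using Xc T by (auto intro!: mat_eq_by_mult_vec[of _ n])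
qed

lemma centralizer_add:
  "P \<in> centralizer n S \<Longrightarrow> Q \<in> centralizer n S \<Longrightarrow> S \<subseteq> carrier_mat n n \<Longrightarrow> P + Q \<in> centralizer n S"
  unfolding centralizer_def by (auto simp: add_mult_distrib_mat[of _ n n] mult_add_distrib_mat[of _ n n])

lemma centralizer_smult: "P \<in> centralizer n S \<Longrightarrow> S \<subseteq> carrier_mat n n \<Longrightarrow> c \<cdot>\<^sub>m P \<in> centralizer n S"
  unfolding centralizer_def by (auto simp: mult_smult_assoc_mat[of _ n n] mult_smult_distrib[of _ n n])

lemma centralizer_mult:
  assumes "P \<in> centralizer n S" "Q \<in> centralizer n S" "S \<subseteq> carrier_mat n n"
  shows "P * Q \<in> centralizer n S"
proof -
  have "P * Q * M = M * (P * Q)" if M: "M \<in> S" for M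
  proof -
    have c: "P \<in> carrier_mat n n" "Q \<in> carrier_mat n n" "M \<in> carrier_mat n n"
      using assms M unfolding centralizer_def by auto
    have "P * Q * M = P * (Q * M)" using c by simp
    also have "\<dots> = (P * M) * Q" using c assms(2) M unfolding centralizer_def by simp
    also have "\<dots> = M * (P * Q)" using c assms(1) M unfolding centralizer_def by simp
    finally show ?thesis .
  qed
  then show ?thesis using assms unfolding centralizer_def by auto
qed

lemma centralizer_right_inverse:
  fixes P Q :: "'a :: field mat"
  assumes P: "P \<in> centralizer n S" and Q: "Q \<in> carrier_mat n n" "P * Q = 1\<^sub>m n"
    and S: "S \<subseteq> carrier_mat n n"
  shows "Q \<in> centralizer n S"
proof -
  have Pc: "P \<in> carrier_mat n n" using P unfolding centralizer_def by auto
  have inv: "Q * P = 1\<^sub>m n" using mat_right_inverse_imp_left_inverse[OF Pc Q] .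
  have "Q * M = M * Q" if M: "M \<in> S" for M
  proof -
    have Mc: "M \<in> carrier_mat n n" using M S by auto
    have "Q * M = Q * M * (P * Q)" using Q Mc by simp
    also have "\<dots> = Q * (M * P) * Q" using Pc Q(1) Mc by (simp add: assoc_mult_mat[of _ n n _ n _ n])
    also have "\<dots> = Q * (P * M) * Q" using P M unfolding centralizer_def by auto
    also have "\<dots> = (Q * P) * M * Q" using Pc Q(1) Mc by (simp add: assoc_mult_mat[of _ n n _ n _ n])
    also have "\<dots> = M * Q" using Mc inv by simp
    finally show ?thesis .
  qed
  then show ?thesis using Q unfolding centralizer_def by auto
qed

lemma zrhs_in_centralizer:
  assumes "S \<subseteq> carrier_mat n n"
    and "X \<in> centralizer n S" "Xi \<in> centralizer n S" "L \<in> centralizer n S" "Li \<in> centralizer n S"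
    and "Y \<in> centralizer n S" "Yi \<in> centralizer n S" "Z \<in> centralizer n S" "Zi \<in> centralizer n S"
  shows "zrhs q X Xi L Li Y Yi Z Zi \<in> centralizer n S"
  unfolding zrhs_def using assms by (intro centralizer_smult centralizer_add centralizer_mult)

section \<open>The Terwilliger algebra\<close>

lemma term_alg_carrier:
  assumes "A \<in> carrier_mat n n" "B \<in> carrier_mat n n"
  shows "term_alg n A B \<subseteq> carrier_mat n n"
proof
  show "M \<in> carrier_mat n n" if "M \<in> term_alg n A B" for M
    using that by (induction rule: term_alg.induct) (use assms in auto)
qed

lemma term_alg_diff:
  assumes "A \<in> carrier_mat n n" "B \<in> carrier_mat n n" "P \<in> term_alg n A B" "Q \<in> term_alg n A B"
  shows "P - Q \<in> term_alg n A B"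
proof -
  have "P \<in> carrier_mat n n" "Q \<in> carrier_mat n n" using term_alg_carrier[OF assms(1,2)] assms(3,4) by auto
  then have "P - Q = P + (-1) \<cdot>\<^sub>m Q" by (intro eq_matI) auto
  then show ?thesis using assms(3,4) by (simp add: term_alg.add term_alg.smult)
qed

lemma zlhs_in_term_alg:
  assumes "A \<in> carrier_mat n n" "B \<in> carrier_mat n n"
    "X \<in> term_alg n A B" "Y \<in> term_alg n A B" "Z \<in> term_alg n A B"
  shows "zlhs q X Y Z \<in> term_alg n A B"
  unfolding zlhs_def using assms by (intro term_alg.add term_alg.smult term_alg_diff term_alg.mult)

lemma term_alg_adjoint_closed:
  assumes A: "A \<in> carrier_mat n n" and B: "B \<in> carrier_mat n n"
    and gens: "adjoint_mat A \<in> term_alg n A B" "adjoint_mat B \<in> term_alg n A B"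
  shows "adjoint_mat ` term_alg n A B \<subseteq> term_alg n A B"
proof -
  have T: "term_alg n A B \<subseteq> carrier_mat n n" using term_alg_carrier[OF A B] .
  have "adjoint_mat M \<in> term_alg n A B" if "M \<in> term_alg n A B" for M
    using that
  proof (induction rule: term_alg.induct)
    case (add M N)
    then have "M \<in> carrier_mat n n" "N \<in> carrier_mat n n" using T by auto
    then show ?case using add.IH by (simp add: adjoint_mat_add term_alg.add)
  next
    case (mult M N)
    then have "M \<in> carrier_mat n n" "N \<in> carrier_mat n n" using T by auto
    then show ?case using mult.IH by (simp add: adjoint_mat_mult term_alg.mult)
  qed (use gens in \<open>simp_all add: term_alg.one adjoint_mat_smult term_alg.smult\<close>)
  then show ?thesis by blast
qed

lemma exists_interpolating_poly:
  fixes g :: "complex \<Rightarrow> complex"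
  assumes "finite L"
  shows "\<exists>p. \<forall>z\<in>L. poly p z = g z"
  using assms
proof (induction rule: finite_induct)
  case (insert l L)
  then obtain p where p: "\<forall>z\<in>L. poly p z = g z" by auto
  define r where "r = (\<Prod>m\<in>L. [:-m, 1:])"
  have rl: "poly r l \<noteq> 0" and rL: "\<forall>z\<in>L. poly r z = 0"
    unfolding r_def poly_prod using insert by auto
  have "\<forall>z\<in>insert l L. poly (p + smult ((g l - poly p l) / poly r l) r) z = g z"
    using p rl rL by auto
  then show ?case by blast
qed auto

lemma diagonal_poly_in_term_alg:
  assumes B: "B = mat n n (\<lambda>(i, j). if i = j then d i else 0)"
  shows "mat n n (\<lambda>(i, j). if i = j then poly p (d i) else 0) \<in> term_alg n A B"
proof (induction p rule: pCons_induct)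
  case 0
  have "mat n n (\<lambda>(i, j). if i = j then poly 0 (d i) else 0) = 0 \<cdot>\<^sub>m 1\<^sub>m n"
    by (intro eq_matI) auto
  then show ?case by (simp add: term_alg.smult term_alg.one del: poly_0)
next
  case (pCons a p)
  let ?X = "mat n n (\<lambda>(i, j). if i = j then poly p (d i) else 0)"
  have "mat n n (\<lambda>(i, j). if i = j then poly (pCons a p) (d i) else 0) = a \<cdot>\<^sub>m 1\<^sub>m n + B * ?X"
    using B by (intro eq_matI) (auto simp: scalar_prod_def if_distrib[where f = "\<lambda>c. c * _"] cong: if_cong)
  then show ?case using pCons B
    by (simp add: term_alg.add term_alg.mult term_alg.smult term_alg.one term_alg.genAs)
qed

lemma adjoint_diagonal_in_term_alg:
  assumes B: "B = mat n n (\<lambda>(i, j). if i = j then d i else 0)"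
  shows "adjoint_mat B \<in> term_alg n A B"
proof -
  obtain p where p: "\<forall>z\<in>d ` {..<n}. poly p z = cnj z"
    using exists_interpolating_poly[of "d ` {..<n}" cnj] by auto
  have "adjoint_mat B = mat n n (\<lambda>(i, j). if i = j then poly p (d i) else 0)"
    unfolding adjoint_mat_def B using p by (intro eq_matI) auto
  then show ?thesis using diagonal_poly_in_term_alg[OF B] by simp
qed

lemma adjoint_adj_mat: "simple_graph n G \<Longrightarrow> adjoint_mat (adj_mat n G) = adj_mat n G"
  unfolding adj_mat_def adjoint_mat_def simple_graph_def by (intro eq_matI) auto

theorem theorem5p13:
  fixes n :: nat and G :: "nat \<Rightarrow> nat \<Rightarrow> bool" and D x :: nat
    and Eid :: "nat \<Rightarrow> complex mat" and th ths :: "nat \<Rightarrow> complex"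
    and q w u v ws us vs a b :: complex
    and T :: "complex mat set"
    and A As AA BB C Ma Mai Mb Mbi Mc Mci Mlam Mlami :: "complex mat"
    and cW :: "complex vec set \<Rightarrow> complex"
  assumes q: "q \<noteq> 0" "q ^ 4 \<noteq> 1"
    and drg: "distance_regular n G" "D = diameter n G" "3 \<le> D"
    and idem: "primitive_idempotents n G D Eid"
      "Eid 0 = (1 / of_nat n) \<cdot>\<^sub>m all_ones n"
      "q_polynomial_ordering n Eid D"
    and adj: "A = adj_mat n G" "A = msum n (\<lambda>i. th i \<cdot>\<^sub>m Eid i) {..D}"
    and base: "x < n"
    and dual: "As = dual_adj n Eid x" "As = msum n (\<lambda>i. ths i \<cdot>\<^sub>m dual_idem n G x i) {..D}"
    and Tdef: "T = term_alg n A As"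
    and racah: "\<forall>i\<le>D. th i = w + u * q powi (2 * int i - int D) + v * q powi (int D - 2 * int i)"
      "\<forall>i\<le>D. ths i = ws + us * q powi (2 * int i - int D) + vs * q powi (int D - 2 * int i)"
      "u \<noteq> 0" "v \<noteq> 0" "us \<noteq> 0" "vs \<noteq> 0"
    and ab: "a ^ 2 = u / v" "b ^ 2 = us / vs"
    and bold: "AA = (1 / (a * v)) \<cdot>\<^sub>m (A - w \<cdot>\<^sub>m 1\<^sub>m n)"
      "BB = (1 / (b * vs)) \<cdot>\<^sub>m (As - ws \<cdot>\<^sub>m 1\<^sub>m n)"
    and thin: "\<forall>W. irreducible_tmodule n T W \<longrightarrow> thin_module n G x W"
    and cdef: "\<forall>W. irreducible_tmodule n T W \<longrightarrow>
                   cW W ^ 2 - mod_kappa n G Eid D x q a b AA W * cW W + 1 = 0"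
      "\<forall>W W'. irreducible_tmodule n T W \<longrightarrow> irreducible_tmodule n T W' \<longrightarrow>
                   mod_iso n T W W' \<longrightarrow> cW W = cW W'"
    and ops: "acts_as_scalar n T Ma (mod_a n G Eid D x q a)"
      "acts_as_scalar n T Mb (mod_b n G D x q b)"
      "acts_as_scalar n T Mc cW"
      "acts_as_scalar n T Mlam (\<lambda>W. q ^ (mod_diameter n G x W + 1))"
    and invs: "Mai \<in> carrier_mat n n" "Ma * Mai = 1\<^sub>m n"
      "Mbi \<in> carrier_mat n n" "Mb * Mbi = 1\<^sub>m n"
      "Mci \<in> carrier_mat n n" "Mc * Mci = 1\<^sub>m n"
      "Mlami \<in> carrier_mat n n" "Mlam * Mlami = 1\<^sub>m n"
    and C: "C \<in> T"
      "zlhs q AA BB C = zrhs q Ma Mai Mlam Mlami Mb Mbi Mc Mci"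
      "zlhs q BB C AA = zrhs q Mb Mbi Mlam Mlami Mc Mci Ma Mai"
      "zlhs q C AA BB = zrhs q Mc Mci Mlam Mlami Ma Mai Mb Mbi"
    and Cuniq: "\<forall>C'\<in>T. zlhs q AA BB C' = zrhs q Ma Mai Mlam Mlami Mb Mbi Mc Mci \<and>
                   zlhs q BB C' AA = zrhs q Mb Mbi Mlam Mlami Mc Mci Ma Mai \<and>
                   zlhs q C' AA BB = zrhs q Mc Mci Mlam Mlami Ma Mai Mb Mbi \<longrightarrow> C' = C"
  shows "central_in T (zlhs q AA BB C) \<and> central_in T (zlhs q BB C AA) \<and>
         central_in T (zlhs q C AA BB)"
proof -
  have A: "A \<in> carrier_mat n n" using adj(1) unfolding adj_mat_def by auto
  have As: "As \<in> carrier_mat n n" using dual(1) unfolding dual_adj_def by auto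
  have T_carrier: "T \<subseteq> carrier_mat n n" using term_alg_carrier[OF A As] Tdef by simp
  have "adjoint_mat A = A"
    using adjoint_adj_mat drg(1) adj(1) unfolding distance_regular_def by auto
  moreover have "adjoint_mat As \<in> term_alg n A As"
    by (rule adjoint_diagonal_in_term_alg) (simp add: dual(1) dual_adj_def)
  ultimately have T_adjoint: "adjoint_mat ` T \<subseteq> T"
    using term_alg_adjoint_closed[OF A As] term_alg.genA Tdef by auto
  have scalars: "Ma \<in> centralizer n T" "Mb \<in> centralizer n T" "Mc \<in> centralizer n T"
    "Mlam \<in> centralizer n T"
    using ops acts_as_scalar_in_centralizer[OF T_carrier T_adjoint] by blast+
  then have inverses: "Mai \<in> centralizer n T" "Mbi \<in> centralizer n T" "Mci \<in> centralizer n T"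
    "Mlami \<in> centralizer n T"
    using invs centralizer_right_inverse T_carrier by blast+
  have "AA \<in> T" "BB \<in> T"
    unfolding bold Tdef
    by (intro term_alg.smult term_alg_diff[OF A As] term_alg.genA term_alg.genAs term_alg.one)+
  then have "zlhs q AA BB C \<in> T" "zlhs q BB C AA \<in> T" "zlhs q C AA BB \<in> T"
    using zlhs_in_term_alg[OF A As] C(1) Tdef by auto
  moreover have "zlhs q AA BB C \<in> centralizer n T" "zlhs q BB C AA \<in> centralizer n T"
    "zlhs q C AA BB \<in> centralizer n T"
    unfolding C(2-4) using zrhs_in_centralizer[OF T_carrier] scalars inverses by auto
  ultimately show ?thesis unfolding central_in_def centralizer_def by auto
qed

end
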